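(* Let $L\ge1$ and $n\ge2$ be integers, let $0<f_s<f_c<f_p$ with $f_c=\frac{f_p-f_s}{n-1}$, let $M_1=-\lfloor L/2\rfloor$, $M_2=\lfloor (L-1)/2\rfloor$, and for $\xi\in\{1,\dots,nL\}$ let $\mathcal{F}(\xi)=\big(\lceil \xi/n\rceil-\lfloor L/2\rfloor-1\big)f_p+\big((\xi-1)\bmod n\big)f_c$ and $I_\xi=[\mathcal{F}(\xi),\mathcal{F}(\xi)+f_s]$. Let $N_{\mathrm{sig}}\ge1$ and let $f_1^{\min}<f_1^{\max}<f_2^{\min}<\dots<f_{N_{\mathrm{sig}}}^{\min}<f_{N_{\mathrm{sig}}}^{\max}$ be reals in $[M_1f_p,(M_2+1)f_p]$, with $B_j=f_j^{\max}-f_j^{\min}$, $\mathcal{B}=\sum_{j}B_j$ and $\mathcal{T}=\bigcup_j[f_j^{\min},f_j^{\max})$. Let $\Sigma=\{\xi\in\{1,\dots,nL\}: I_\xi\cap\mathcal{T} \text{ has positive length}\}$. If $$2\sum_{j=1}^{N_{\mathrm{sig}}}\Big(n\big\lfloor \tfrac{B_j}{f_p}\big\rfloor+\Big\lceil \tfrac{\operatorname{mod}(B_j,f_p)}{f_c}\Big\rceil+1\Big)f_s+2N_{\mathrm{sig}}f_c\le\mathcal{B},$$ then $$2|\Sigma|\,f_s+2N_{\mathrm{sig}}f_c\le\mathcal{B}.$$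
   Context: $\operatorname{mod}(B,f_p)=B-f_p\lfloor B/f_p\rfloor$. Row $\xi$ of the signal matrix represents the spectrum on $I_\xi$, so $\Sigma$ plays the role of the row support $\operatorname{supp}(\mathbf{X})$ of the signal matrix. The quantity $2|\Sigma|f_s+\mathcal{B}+2N_{\mathrm{sig}}f_c$ is an upper bound on the overall sampling rate of the scheme, and the conclusion states it is at most $2\mathcal{B}$. *)

theory Defs
  imports "HOL-Analysis.Analysis"
begin

definition chanF :: "nat \<Rightarrow> nat \<Rightarrow> real \<Rightarrow> real \<Rightarrow> nat \<Rightarrow> real" where
  "chanF L n fp fc xi =
     real_of_int (\<lceil>real xi / real n\<rceil> - int (L div 2) - 1) * fp
     + real ((xi - 1) mod n) * fc"

definition chanI :: "nat \<Rightarrow> nat \<Rightarrow> real \<Rightarrow> real \<Rightarrow> real \<Rightarrow> nat \<Rightarrow> real set" where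
  "chanI L n fp fc fs xi = {chanF L n fp fc xi .. chanF L n fp fc xi + fs}"

definition sigT :: "nat \<Rightarrow> (nat \<Rightarrow> real) \<Rightarrow> (nat \<Rightarrow> real) \<Rightarrow> real set" where
  "sigT N fmin fmax = (\<Union>j\<in>{1..N}. {fmin j ..< fmax j})"

definition activeSet :: "nat \<Rightarrow> nat \<Rightarrow> real \<Rightarrow> real \<Rightarrow> real \<Rightarrow> nat \<Rightarrow> (nat \<Rightarrow> real) \<Rightarrow> (nat \<Rightarrow> real) \<Rightarrow> nat set" where
  "activeSet L n fp fc fs N fmin fmax =
     {xi \<in> {1..n*L}. emeasure lborel (chanI L n fp fc fs xi \<inter> sigT N fmin fmax) > 0}"

definition rmod :: "real \<Rightarrow> real \<Rightarrow> real" where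
  "rmod B fp = B - fp * real_of_int \<lfloor>B / fp\<rfloor>"

end

theory Submission
  imports Defs
begin

text \<open>Channel \<xi> starts at \<open>c + offset (\<xi> - 1)\<close> with \<open>c = -\<lfloor>L/2\<rfloor> f\<^sub>p\<close> and
  \<open>offset m = \<lfloor>m/n\<rfloor> f\<^sub>p + (m mod n) f\<^sub>c\<close>. The offsets advance by \<open>f\<^sub>p\<close> every \<open>n\<close> steps and
  by at least \<open>(t - 1) f\<^sub>c + f\<^sub>s\<close> over \<open>t \<le> n\<close> steps. A channel meets the band \<open>[f\<^sub>j\<^sup>m\<^sup>i\<^sup>n, f\<^sub>j\<^sup>m\<^sup>a\<^sup>x)\<close>
  in positive length only if it starts in the open window \<open>(f\<^sub>j\<^sup>m\<^sup>i\<^sup>n - f\<^sub>s, f\<^sub>j\<^sup>m\<^sup>a\<^sup>x)\<close> of length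
  \<open>B\<^sub>j + f\<^sub>s\<close>, and the spacing of the offsets allows at most
  \<open>n \<lfloor>B\<^sub>j/f\<^sub>p\<rfloor> + \<lceil>mod(B\<^sub>j, f\<^sub>p)/f\<^sub>c\<rceil> + 1\<close> starts in such a window. A union bound over the
  bands bounds \<open>|\<Sigma>|\<close>, and the hypothesis concludes.\<close>

lemma rmod_eq_frac: "fp \<noteq> 0 \<Longrightarrow> rmod B fp = fp * frac (B / fp)"
  by (simp add: rmod_def frac_def algebra_simps)

lemma rmod_nonneg: "fp > 0 \<Longrightarrow> 0 \<le> rmod B fp"
  by (simp add: rmod_eq_frac)

lemma rmod_less: "fp > 0 \<Longrightarrow> rmod B fp < fp"
  using frac_lt_1[of "B / fp"] by (simp add: rmod_eq_frac)

lemma ceiling_of_nat_divide: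
  assumes "n > 0" "xi \<ge> 1"
  shows "\<lceil>real xi / real n\<rceil> = int ((xi - 1) div n) + 1"
proof -
  define d e where "d = (xi - 1) div n" and "e = (xi - 1) mod n"
  have xi: "xi = d * n + e + 1" using assms by (simp add: d_def e_def)
  have "e < n" using assms by (simp add: e_def)
  then have "real d * real n < real xi" "real xi \<le> (real d + 1) * real n"
    using xi by (simp_all add: algebra_simps)
  then have "real d < real xi / real n" "real xi / real n \<le> real d + 1"
    using assms by (simp_all add: field_simps)
  then show ?thesis by (simp add: ceiling_eq_iff d_def)
qed

lemma emeasure_pos_imp_meets_sigT:
  assumes "0 < emeasure lborel ({s..s + w} \<inter> sigT N fmin fmax)"
  shows "\<exists>j\<in>{1..N}. fmin j - w < s \<and> s < fmax j"
proof (rule ccontr)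
  assume disjoint: "\<not> ?thesis"
  have "{s..s + w} \<inter> sigT N fmin fmax \<subseteq> {s + w}"
  proof
    fix x assume x: "x \<in> {s..s + w} \<inter> sigT N fmin fmax"
    then obtain j where "j \<in> {1..N}" "fmin j \<le> x" "x < fmax j" by (auto simp: sigT_def)
    with disjoint x show "x \<in> {s + w}" by force
  qed
  then have "emeasure lborel ({s..s + w} \<inter> sigT N fmin fmax) \<le> emeasure lborel {s + w}"
    by (intro emeasure_mono) auto
  with assms show False by simp
qed

definition band_channel_bound :: "nat \<Rightarrow> real \<Rightarrow> real \<Rightarrow> real \<Rightarrow> int" where
  "band_channel_bound n fp fc B = int n * \<lfloor>B / fp\<rfloor> + \<lceil>rmod B fp / fc\<rceil> + 1"

locale channel_grid =
  fixes n :: nat and fp fc fs :: real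
  assumes n_pos: "n > 0" and fs_pos: "0 < fs" and fs_le_fc: "fs \<le> fc"
    and fp_ge: "real (n - 1) * fc + fs \<le> fp"
begin

definition offset :: "nat \<Rightarrow> real" where
  "offset m = real (m div n) * fp + real (m mod n) * fc"

definition starts_between :: "nat \<Rightarrow> real \<Rightarrow> real \<Rightarrow> real \<Rightarrow> nat set" where
  "starts_between K c a b = {m. m < K \<and> a < c + offset m \<and> c + offset m < b}"

lemma fc_pos: "fc > 0"
  using fs_pos fs_le_fc by simp

lemma fp_pos: "fp > 0"
proof -
  have "0 \<le> real (n - 1) * fc" using fc_pos by simp
  with fp_ge fs_pos show ?thesis by linarith
qed

lemma offset_add_period: "offset (m + n * q) = offset m + real q * fp"
  using n_pos by (simp add: offset_def algebra_simps)

lemma offset_add_ge: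
  assumes "1 \<le> t" "t \<le> n"
  shows "offset m + real (t - 1) * fc + fs \<le> offset (m + t)"
proof -
  define d e where "d = m div n" and "e = m mod n"
  have m: "m = e + n * d" and "e < n" using n_pos by (simp_all add: d_def e_def)
  show ?thesis
  proof (cases "e + t < n")
    case True
    then have "(m + t) div n = d" "(m + t) mod n = e + t"
      by (simp_all add: m add.commute[of _ t] add.assoc[symmetric])
    then have "offset (m + t) = offset m + real t * fc"
      by (simp add: offset_def d_def e_def algebra_simps)
    with assms fs_le_fc show ?thesis by (simp add: of_nat_diff algebra_simps)
  next
    case False
    have mt: "m + t = (e + t - n) + n * (d + 1)" using False m by simp
    have "e + t - n < n" using \<open>e < n\<close> assms by simp
    then have "(m + t) div n = d + 1" "(m + t) mod n = e + t - n"
      unfolding mt using n_pos by (simp_all only: div_mult_self2 mod_mult_self2) simp_all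
    then have "offset (m + t) = offset m + fp - real (n - t) * fc"
      using False assms by (simp add: offset_def d_def e_def of_nat_diff algebra_simps)
    with assms fp_ge show ?thesis by (simp add: of_nat_diff algebra_simps)
  qed
qed

lemma strict_mono_offset: "strict_mono offset"
proof (rule strict_monoI_Suc)
  fix m show "offset m < offset (Suc m)"
    using offset_add_ge[of 1 m] n_pos fs_pos by simp
qed

text \<open>With \<open>B = q f\<^sub>p + r\<close>, \<open>0 \<le> r < f\<^sub>p\<close>: after \<open>n q + u + 1\<close> steps the offset has grown by
  \<open>q f\<^sub>p + u f\<^sub>c + f\<^sub>s\<close> if \<open>u < n\<close>, and by \<open>(q + 1) f\<^sub>p + f\<^sub>s\<close> otherwise.\<close>
lemma offset_span_le:
  assumes span: "offset m' < offset m + real q * fp + r + fs"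
    and "r < fp" and "r \<le> real u * fc"
  shows "m' \<le> m + n * q + u"
proof (rule ccontr)
  assume "\<not> ?thesis"
  then have far: "m + n * q + (u + 1) \<le> m'" by simp
  show False
  proof (cases "u < n")
    case True
    have "offset m + real q * fp + real u * fc + fs \<le> offset (m + n * q + (u + 1))"
      using offset_add_ge[of "u + 1" "m + n * q"] True by (simp add: offset_add_period)
    also have "\<dots> \<le> offset m'"
      using far strict_mono_offset by (simp add: strict_mono_less_eq)
    finally show False using span assms by simp
  next
    case False
    have "offset m + fs + real (q + 1) * fp \<le> offset (Suc m) + real (q + 1) * fp"
      using offset_add_ge[of 1 m] n_pos by simp
    also have "\<dots> = offset (Suc m + n * (q + 1))"
      by (rule offset_add_period[symmetric])
    also have "\<dots> \<le> offset m'"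
      using far False strict_mono_offset by (simp add: strict_mono_less_eq)
    finally show False using span assms by (simp add: algebra_simps)
  qed
qed

lemma card_le_of_offset_diameter:
  assumes "finite S" and "B \<ge> 0"
    and diameter: "\<And>m m'. m \<in> S \<Longrightarrow> m' \<in> S \<Longrightarrow> offset m' < offset m + B + fs"
  shows "int (card S) \<le> band_channel_bound n fp fc B"
proof -
  define q where "q = nat \<lfloor>B / fp\<rfloor>"
  define r where "r = rmod B fp"
  define u where "u = nat \<lceil>r / fc\<rceil>"
  have r_bounds: "0 \<le> r" "r < fp" using rmod_nonneg rmod_less fp_pos by (simp_all add: r_def)
  have q: "int q = \<lfloor>B / fp\<rfloor>" using \<open>B \<ge> 0\<close> fp_pos by (simp add: q_def)
  have "0 \<le> r / fc" using r_bounds fc_pos by simp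
  then have u: "int u = \<lceil>r / fc\<rceil>" by (simp add: u_def)
  have "real q = of_int \<lfloor>B / fp\<rfloor>" "real u = of_int \<lceil>r / fc\<rceil>"
    using q u by (metis of_int_of_nat_eq)+
  then have B: "B = real q * fp + r" and "r \<le> real u * fc"
    using fc_pos by (simp_all add: r_def rmod_def pos_divide_le_eq[symmetric])
  have "card S \<le> n * q + u + 1"
  proof (cases "S = {}")
    case False
    define m0 m1 where "m0 = Min S" and "m1 = Max S"
    have "m0 \<in> S" "m1 \<in> S" using \<open>finite S\<close> False by (simp_all add: m0_def m1_def)
    then have "offset m1 < offset m0 + real q * fp + r + fs"
      using diameter B by (metis add.assoc)
    then have "m1 \<le> m0 + n * q + u"
      using r_bounds(2) \<open>r \<le> real u * fc\<close> by (rule offset_span_le)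
    moreover have "S \<subseteq> {m0..m1}" using \<open>finite S\<close> by (auto simp: m0_def m1_def)
    then have "card S \<le> Suc m1 - m0" using card_mono[of "{m0..m1}" S] by simp
    ultimately show ?thesis by linarith
  qed simp
  then have "int (card S) \<le> int (n * q + u + 1)" by (rule of_nat_mono)
  then show ?thesis by (simp add: band_channel_bound_def flip: q u r_def)
qed

lemma card_starts_between_le:
  "a \<le> b \<Longrightarrow> int (card (starts_between K c (a - fs) b)) \<le> band_channel_bound n fp fc (b - a)"
  by (intro card_le_of_offset_diameter) (auto simp: starts_between_def)

lemma chanF_eq_offset:
  "xi \<ge> 1 \<Longrightarrow> chanF L n fp fc xi = - real (L div 2) * fp + offset (xi - 1)"
  unfolding chanF_def offset_def ceiling_of_nat_divide[OF n_pos]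
  by (simp add: algebra_simps)

lemma activeSet_subset_starts_between:
  "activeSet L n fp fc fs N fmin fmax
     \<subseteq> (\<Union>j\<in>{1..N}. Suc ` starts_between (n * L) (- real (L div 2) * fp) (fmin j - fs) (fmax j))"
proof
  fix xi assume "xi \<in> activeSet L n fp fc fs N fmin fmax"
  then have xi: "xi \<in> {1..n * L}"
    and "0 < emeasure lborel ({chanF L n fp fc xi..chanF L n fp fc xi + fs} \<inter> sigT N fmin fmax)"
    by (auto simp: activeSet_def chanI_def)
  then obtain j where "j \<in> {1..N}" "fmin j - fs < chanF L n fp fc xi" "chanF L n fp fc xi < fmax j"
    using emeasure_pos_imp_meets_sigT by blast
  with xi have "xi - 1 \<in> starts_between (n * L) (- real (L div 2) * fp) (fmin j - fs) (fmax j)"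
    using chanF_eq_offset[of xi L] by (auto simp: starts_between_def)
  moreover have "xi = Suc (xi - 1)" using xi by simp
  ultimately show "xi \<in> (\<Union>j\<in>{1..N}.
      Suc ` starts_between (n * L) (- real (L div 2) * fp) (fmin j - fs) (fmax j))"
    using \<open>j \<in> {1..N}\<close> by blast
qed

lemma card_activeSet_le:
  assumes "\<And>j. j \<in> {1..N} \<Longrightarrow> fmin j \<le> fmax j"
  shows "real (card (activeSet L n fp fc fs N fmin fmax))
    \<le> (\<Sum>j=1..N. real_of_int (band_channel_bound n fp fc (fmax j - fmin j)))"
proof -
  define W where "W j = starts_between (n * L) (- real (L div 2) * fp) (fmin j - fs) (fmax j)" for j
  have "card (activeSet L n fp fc fs N fmin fmax) \<le> card (\<Union>j\<in>{1..N}. Suc ` W j)"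
    using activeSet_subset_starts_between unfolding W_def
    by (intro card_mono) (auto simp: starts_between_def)
  also have "\<dots> \<le> (\<Sum>j=1..N. card (W j))"
    using card_UN_le[of "{1..N}" "\<lambda>j. Suc ` W j"] by (simp add: card_image)
  finally have "real (card (activeSet L n fp fc fs N fmin fmax)) \<le> (\<Sum>j=1..N. real (card (W j)))"
    by (metis of_nat_le_iff of_nat_sum)
  also have "\<dots> \<le> (\<Sum>j=1..N. real_of_int (band_channel_bound n fp fc (fmax j - fmin j)))"
  proof (rule sum_mono)
    fix j assume "j \<in> {1..N}"
    then have "int (card (W j)) \<le> band_channel_bound n fp fc (fmax j - fmin j)"
      unfolding W_def by (intro card_starts_between_le assms)
    then show "real (card (W j)) \<le> real_of_int (band_channel_bound n fp fc (fmax j - fmin j))"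
      by (metis of_int_le_iff of_int_of_nat_eq)
  qed
  finally show ?thesis .
qed

end

theorem theorem1:
  fixes L n N :: nat and fs fc fp :: real and fmin fmax :: "nat \<Rightarrow> real"
  assumes "L \<ge> 1" and "n \<ge> 2"
    and "0 < fs" and "fs < fc" and "fc < fp"
    and "fc = (fp - fs) / real (n - 1)"
    and "N \<ge> 1"
    and "\<And>j. j \<in> {1..N} \<Longrightarrow> fmin j < fmax j"
    and "\<And>j. j \<in> {1..<N} \<Longrightarrow> fmax j < fmin (j + 1)"
    and "\<And>j. j \<in> {1..N} \<Longrightarrow>
           - real (L div 2) * fp \<le> fmin j \<and> fmax j \<le> (real ((L - 1) div 2) + 1) * fp"
    and "2 * (\<Sum>j=1..N. real_of_int (int n * \<lfloor>(fmax j - fmin j) / fp\<rfloor>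
                 + \<lceil>rmod (fmax j - fmin j) fp / fc\<rceil> + 1) * fs)
         + 2 * real N * fc \<le> (\<Sum>j=1..N. fmax j - fmin j)"
  shows "2 * real (card (activeSet L n fp fc fs N fmin fmax)) * fs + 2 * real N * fc
         \<le> (\<Sum>j=1..N. fmax j - fmin j)"
proof -
  have "real (n - 1) > 0" using assms(2) by simp
  then have "real (n - 1) * fc + fs = fp" using assms(6) by (simp add: field_simps)
  then interpret channel_grid n fp fc fs
    using assms(2-4) by unfold_locales auto
  have "real (card (activeSet L n fp fc fs N fmin fmax)) * fs
    \<le> (\<Sum>j=1..N. real_of_int (band_channel_bound n fp fc (fmax j - fmin j))) * fs"
    using assms(8) fs_pos by (intro mult_right_mono card_activeSet_le) (simp_all add: less_imp_le)
  with assms(11) show ?thesis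
    unfolding sum_distrib_right band_channel_bound_def by linarith
qed

end
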